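(* Let $p\neq\operatorname{char}k_0$ be a prime and $n\geq1$. Let $T\subset\operatorname{PGL}_{p^n}$ be a split maximal torus with root system $\Phi\subset X(T)$ and Weyl group $W$. There exists a surjective homomorphism $\varepsilon:X(T)\to\mathbb{F}_p^n$ such that $\varepsilon(\alpha)\neq0$ for all $\alpha\in\Phi$, $X(T)^{W(\varepsilon)_p}=\{0\}$ for a Sylow $p$-subgroup $W(\varepsilon)_p$ of $W(\varepsilon)$, and $$\operatorname{Rank}(W(\varepsilon),X(T);p)\geq n\,p^n.$$
   Context: $\operatorname{PGL}_{p^n}$ is over a field $k_0$. $W(\varepsilon)=\{w\in W:\varepsilon(w.\chi)=\varepsilon(\chi)\text{ for all }\chi\in X(T)\}$. For a finite group $S$ acting on a finitely generated abelian group $\mathcal{U}$ with Sylow $p$-subgroup $S_p$, $\operatorname{Rank}(S,\mathcal{U};p)$ is the minimal size of an $S_p$-invariant subset of $\mathcal{U}$ generating a subgroup of finite index prime to $p$. *)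

theory Defs
  imports "HOL-Algebra.Sym_Groups" "HOL-Computational_Algebra.Primes"
begin

text \<open>Character lattice of the split diagonal maximal torus T of PGL_N:
  X(T) = {chi in Z^N : sum of coordinates = 0}, coordinates indexed by 1..N,
  represented as functions nat => int vanishing outside 1..N.\<close>
definition charX :: "nat \<Rightarrow> (nat \<Rightarrow> int) set" where
  "charX N = {\<chi>. (\<forall>i. i \<notin> {1..N} \<longrightarrow> \<chi> i = 0) \<and> (\<Sum>i=1..N. \<chi> i) = 0}"

definition roots :: "nat \<Rightarrow> (nat \<Rightarrow> int) set" where
  "roots N = {(\<lambda>k. (if k = i then 1 else 0) - (if k = j then 1 else 0)) | i j.
                 i \<in> {1..N} \<and> j \<in> {1..N} \<and> i \<noteq> j}"

definition wact :: "(nat \<Rightarrow> nat) \<Rightarrow> (nat \<Rightarrow> int) \<Rightarrow> (nat \<Rightarrow> int)" where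
  "wact w \<chi> = \<chi> \<circ> Hilbert_Choice.inv w"

definition Fp_vec :: "nat \<Rightarrow> nat \<Rightarrow> (nat \<Rightarrow> int) set" where
  "Fp_vec p n = {v. (\<forall>i. (i \<in> {1..n} \<longrightarrow> 0 \<le> v i \<and> v i < int p) \<and> (i \<notin> {1..n} \<longrightarrow> v i = 0))}"

definition Fp_add :: "nat \<Rightarrow> (nat \<Rightarrow> int) \<Rightarrow> (nat \<Rightarrow> int) \<Rightarrow> (nat \<Rightarrow> int)" where
  "Fp_add p v w = (\<lambda>i. (v i + w i) mod int p)"

definition is_hom_to_Fp :: "nat \<Rightarrow> nat \<Rightarrow> nat \<Rightarrow> ((nat \<Rightarrow> int) \<Rightarrow> (nat \<Rightarrow> int)) \<Rightarrow> bool" where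
  "is_hom_to_Fp N p n \<epsilon> \<longleftrightarrow>
     (\<forall>\<chi>\<in>charX N. \<epsilon> \<chi> \<in> Fp_vec p n) \<and>
     (\<forall>\<chi>\<in>charX N. \<forall>\<psi>\<in>charX N. \<epsilon> (\<lambda>i. \<chi> i + \<psi> i) = Fp_add p (\<epsilon> \<chi>) (\<epsilon> \<psi>))"

definition Weps :: "nat \<Rightarrow> ((nat \<Rightarrow> int) \<Rightarrow> (nat \<Rightarrow> int)) \<Rightarrow> (nat \<Rightarrow> nat) set" where
  "Weps N \<epsilon> = {w \<in> carrier (sym_group N). \<forall>\<chi>\<in>charX N. \<epsilon> (wact w \<chi>) = \<epsilon> \<chi>}"

definition is_sylow :: "nat \<Rightarrow> nat \<Rightarrow> (nat \<Rightarrow> nat) set \<Rightarrow> (nat \<Rightarrow> nat) set \<Rightarrow> bool" where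
  "is_sylow N p S P \<longleftrightarrow> subgroup P (sym_group N) \<and> P \<subseteq> S \<and>
      card P = p ^ multiplicity p (card S)"

definition int_span :: "(nat \<Rightarrow> int) set \<Rightarrow> (nat \<Rightarrow> int) set" where
  "int_span A = {(\<lambda>i. \<Sum>a\<in>F. c a * a i) | F c. finite F \<and> F \<subseteq> A}"

definition cosets_in :: "(nat \<Rightarrow> int) set \<Rightarrow> (nat \<Rightarrow> int) set \<Rightarrow> (nat \<Rightarrow> int) set set" where
  "cosets_in U H = U // {(x, y). x \<in> U \<and> y \<in> U \<and> (\<lambda>i. x i - y i) \<in> H}"

text \<open>Rank(S, X(T); p) computed with respect to the Sylow p-subgroup P of S
  (independent of the choice of P by Sylow conjugacy):
  minimal size of a P-invariant subset of X(T) generating a subgroup of finite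
  index prime to p.\<close>
definition admissible_gen :: "nat \<Rightarrow> nat \<Rightarrow> (nat \<Rightarrow> nat) set \<Rightarrow> (nat \<Rightarrow> int) set \<Rightarrow> bool" where
  "admissible_gen N p P A \<longleftrightarrow> finite A \<and> A \<subseteq> charX N \<and>
      (\<forall>w\<in>P. \<forall>a\<in>A. wact w a \<in> A) \<and>
      finite (cosets_in (charX N) (int_span A)) \<and>
      coprime (card (cosets_in (charX N) (int_span A))) p"

definition Rank :: "nat \<Rightarrow> nat \<Rightarrow> (nat \<Rightarrow> nat) set \<Rightarrow> nat" where
  "Rank N p P = (LEAST m. \<exists>A. admissible_gen N p P A \<and> card A = m)"

end

theory Submission
  imports Defs "HOL-Algebra.Multiplicative_Group" "HOL-Number_Theory.Cong"
    "HOL-Library.Function_Algebras"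
begin

text \<open>Label the \<open>p\<^sup>n\<close> coordinates of the torus by the vectors \<open>v\<^sub>i\<close> of \<open>F\<^sub>p\<^sup>n\<close> and put
  \<open>\<epsilon>(\<chi>) = \<Sum> \<chi>\<^sub>i v\<^sub>i\<close>. The Weyl elements preserving \<open>\<epsilon>\<close> are exactly the translations of
  \<open>F\<^sub>p\<^sup>n\<close>, a group of order \<open>p\<^sup>n\<close> which is therefore its own Sylow subgroup; it acts
  transitively on the coordinates, so it fixes no nonzero character of degree zero.
  If a translation-invariant set \<open>A\<close> generates a sublattice of index prime to \<open>p\<close>, then
  \<open>\<epsilon>(A)\<close> spans \<open>F\<^sub>p\<^sup>n\<close>, so \<open>A\<close> meets at least \<open>n\<close> nonzero fibres of \<open>\<epsilon>\<close>. A character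
  with \<open>\<epsilon>(\<chi>) \<noteq> 0\<close> is fixed by no nontrivial translation (averaging over the \<open>p\<close> points of
  an orbit would force \<open>\<epsilon>(\<chi>) = 0\<close>), so each such fibre contains a free orbit of \<open>p\<^sup>n\<close>
  elements, whence \<open>|A| \<ge> n p\<^sup>n\<close>.\<close>

section \<open>Residue sums and fibre counting\<close>

lemma sum_mult_mod_right:
  fixes m :: int
  shows "(\<Sum>i\<in>A. c i * (f i mod m)) mod m = (\<Sum>i\<in>A. c i * f i) mod m"
proof -
  have "(\<Sum>i\<in>A. c i * (f i mod m)) mod m = (\<Sum>i\<in>A. c i * (f i mod m) mod m) mod m"
    by (simp add: mod_sum_eq)
  also have "\<dots> = (\<Sum>i\<in>A. c i * f i mod m) mod m"
    by (simp add: mod_mult_right_eq)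
  also have "\<dots> = (\<Sum>i\<in>A. c i * f i) mod m"
    by (simp add: mod_sum_eq)
  finally show ?thesis .
qed

lemma sum_mod_arith_progression:
  fixes m :: nat and x \<sigma> :: int
  assumes "coprime \<sigma> (int m)"
  shows "(\<Sum>k<m. (x + int k * \<sigma>) mod int m) = (\<Sum>r\<in>{0..<int m}. r)"
proof -
  let ?h = "\<lambda>k. (x + int k * \<sigma>) mod int m"
  have "inj_on ?h {..<m}"
  proof (rule inj_onI)
    fix k k' assume k: "k \<in> {..<m}" "k' \<in> {..<m}" and "?h k = ?h k'"
    then have "int m dvd (int k - int k') * \<sigma>"
      by (simp add: mod_eq_dvd_iff algebra_simps)
    then have "int m dvd int k - int k'"
      using assms by (simp add: coprime_commute coprime_dvd_mult_left_iff)
    show "k = k'"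
    proof (rule ccontr)
      assume "k \<noteq> k'"
      then have "int m \<le> \<bar>int k - int k'\<bar>"
        using dvd_imp_le_int[OF _ \<open>int m dvd int k - int k'\<close>] by simp
      with k show False
        by auto
    qed
  qed
  moreover have "?h ` {..<m} \<subseteq> {0..<int m}"
    by auto
  ultimately have "bij_betw ?h {..<m} {0..<int m}"
    unfolding bij_betw_def using card_subset_eq[of "{0..<int m}" "?h ` {..<m}"]
    by (simp add: card_image)
  then show ?thesis
    by (rule sum.reindex_bij_betw)
qed

lemma weighted_residue_sum_eq_0:
  fixes a L :: "'a \<Rightarrow> int" and m :: nat
  assumes g: "g permutes I" and "m > 0" and cop: "coprime \<sigma> (int m)"
    and shift: "\<And>i. i \<in> I \<Longrightarrow> L (g i) mod int m = (L i + \<sigma>) mod int m"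
    and invariant: "\<And>i. i \<in> I \<Longrightarrow> a (g i) = a i"
    and sum_0: "(\<Sum>i\<in>I. a i) = 0"
  shows "(\<Sum>i\<in>I. a i * (L i mod int m)) = 0"
proof -
  let ?f = "\<lambda>i. L i mod int m"
  let ?S = "\<Sum>i\<in>I. a i * ?f i"
  have g_pow: "(g ^^ k) permutes I" for k
    using permutes_funpow[OF g] .
  have f_pow: "?f ((g ^^ k) i) = (L i + int k * \<sigma>) mod int m" if "i \<in> I" for k i
  proof (induction k)
    case (Suc k)
    have "(g ^^ k) i \<in> I"
      using permutes_in_image[OF g_pow] that by simp
    then have "?f ((g ^^ Suc k) i) = (?f ((g ^^ k) i) + \<sigma>) mod int m"
      using shift by (simp add: mod_add_left_eq)
    also have "\<dots> = ((L i + int k * \<sigma>) mod int m + \<sigma>) mod int m"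
      using Suc by simp
    finally show ?case
      by (simp add: mod_add_right_eq algebra_simps)
  qed simp
  have a_pow: "a ((g ^^ k) i) = a i" if "i \<in> I" for k i
  proof (induction k)
    case (Suc k)
    then show ?case
      using invariant permutes_in_image[OF g_pow] that by simp
  qed simp
  have S_pow: "(\<Sum>i\<in>I. a i * ?f ((g ^^ k) i)) = ?S" for k
    using sum.reindex_bij_betw[OF permutes_imp_bij[OF g_pow], of "\<lambda>i. a i * ?f i"]
    by (simp add: a_pow cong: sum.cong)
  \<comment> \<open>Average over the first \<open>m\<close> iterates of \<open>g\<close>: along each orbit the residues of \<open>L\<close>
      run through all of \<open>\<int>/m\<close>, so every point gets the same total weight.\<close>
  have "int m * ?S = (\<Sum>k<m. \<Sum>i\<in>I. a i * ?f ((g ^^ k) i))"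
    by (simp add: S_pow)
  also have "\<dots> = (\<Sum>i\<in>I. a i * (\<Sum>k<m. ?f ((g ^^ k) i)))"
    by (simp add: sum.swap[of _ "{..<m}"] sum_distrib_left)
  also have "\<dots> = (\<Sum>i\<in>I. a i * (\<Sum>r\<in>{0..<int m}. r))"
    by (intro sum.cong refl) (simp add: f_pow sum_mod_arith_progression[OF cop])
  also have "\<dots> = 0"
    using sum_0 by (simp add: sum_distrib_right[symmetric])
  finally show ?thesis
    using \<open>m > 0\<close> by simp
qed

lemma card_ge_mult_card_fibres:
  assumes "finite A" and "\<And>b. b \<in> B \<Longrightarrow> m \<le> card {a \<in> A. f a = b}"
  shows "card B * m \<le> card A"
proof (cases "finite B")
  case True
  have "card B * m = (\<Sum>b\<in>B. m)"
    by simp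
  also have "\<dots> \<le> (\<Sum>b\<in>B. card {a \<in> A. f a = b})"
    using assms(2) by (rule sum_mono)
  also have "\<dots> = card (\<Union>b\<in>B. {a \<in> A. f a = b})"
    using True \<open>finite A\<close> by (intro card_UN_disjoint[symmetric]) auto
  also have "\<dots> \<le> card A"
    using \<open>finite A\<close> by (intro card_mono) auto
  finally show ?thesis .
qed simp

section \<open>Cosets of index prime to \<open>p\<close>\<close>

lemma (in comm_group) pow_decomposition_coprime_index:
  assumes H: "subgroup H G" and cop: "coprime (card (rcosets H)) p" and x: "x \<in> carrier G"
  shows "\<exists>h\<in>H. \<exists>y\<in>carrier G. x = h \<otimes> y [^] p"
proof -
  interpret normal H G
    using subgroup_imp_normal[OF H] .
  interpret F: group "G Mod H"
    by (rule factorgroup_is_group)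
  let ?c = "H #> x"
  have c: "?c \<in> carrier (G Mod H)"
    using x by (auto simp: FactGroup_def RCOSETS_def)
  \<comment> \<open>\<open>p\<close> is invertible modulo the order of \<open>G/H\<close>, so the coset \<open>Hx\<close> is a \<open>p\<close>-th power.\<close>
  obtain a where a: "[p * a = 1] (mod card (rcosets H))"
    using cong_solve_coprime_nat cop by (metis coprime_commute One_nat_def)
  have "F.ord ?c dvd card (rcosets H)"
    using F.ord_dvd_group_order[OF c] by (simp add: order_def FactGroup_def)
  then have "[int (p * a) = int 1] (mod int (F.ord ?c))"
    using a cong_dvd_modulus_nat cong_int_iff by blast
  then have "?c [^]\<^bsub>G Mod H\<^esub> int 1 = ?c [^]\<^bsub>G Mod H\<^esub> int (p * a)"
    using F.int_pow_eq[OF c] by (simp only: cong_iff_dvd_diff)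
  then have "?c [^]\<^bsub>G Mod H\<^esub> (p * a) = ?c"
    by (metis int_pow_int F.nat_pow_eone c)
  moreover have "?c [^]\<^bsub>G Mod H\<^esub> k = H #> x [^] k" for k :: nat
    using hom_nat_pow[OF r_coset_hom_Mod x is_group F.is_group] by simp
  ultimately have "H #> (x [^] a) [^] p = H #> x"
    by (simp add: nat_pow_pow x mult.commute)
  then have "x \<in> H #> (x [^] a) [^] p"
    using rcos_self[OF x H] by simp
  then show ?thesis
    using x unfolding r_coset_def by blast
qed

section \<open>Vectors over \<open>F\<^sub>p\<close>\<close>

lemma Fp_vec_mod: "v \<in> Fp_vec p n \<Longrightarrow> v k mod int p = v k"
  unfolding Fp_vec_def by (cases "k \<in> {1..n}") auto

lemma Fp_vec_outside: "v \<in> Fp_vec p n \<Longrightarrow> k \<notin> {1..n} \<Longrightarrow> v k = 0"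
  unfolding Fp_vec_def by auto

lemma Fp_vec_eqI:
  "u \<in> Fp_vec p n \<Longrightarrow> v \<in> Fp_vec p n \<Longrightarrow> (\<And>k. u k mod int p = v k mod int p) \<Longrightarrow> u = v"
  using Fp_vec_mod by (metis ext)

lemma Fp_vec_modI:
  "p > 0 \<Longrightarrow> (\<And>k. k \<notin> {1..n} \<Longrightarrow> w k mod int p = 0) \<Longrightarrow> (\<lambda>k. w k mod int p) \<in> Fp_vec p n"
  unfolding Fp_vec_def by auto

lemma zero_in_Fp_vec: "p > 0 \<Longrightarrow> (\<lambda>_. 0) \<in> Fp_vec p n"
  unfolding Fp_vec_def by auto

lemma Fp_add_in_Fp_vec: "p > 0 \<Longrightarrow> u \<in> Fp_vec p n \<Longrightarrow> v \<in> Fp_vec p n \<Longrightarrow> Fp_add p u v \<in> Fp_vec p n"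
  unfolding Fp_add_def by (rule Fp_vec_modI) (auto simp: Fp_vec_outside)

lemma Fp_add_zero_left: "v \<in> Fp_vec p n \<Longrightarrow> Fp_add p (\<lambda>_. 0) v = v"
  unfolding Fp_add_def using Fp_vec_mod by auto

lemma Fp_add_zero_right: "v \<in> Fp_vec p n \<Longrightarrow> Fp_add p v (\<lambda>_. 0) = v"
  unfolding Fp_add_def using Fp_vec_mod by auto

lemma Fp_add_right_cancel:
  assumes "u \<in> Fp_vec p n" "v \<in> Fp_vec p n" "Fp_add p u t = Fp_add p v t"
  shows "u = v"
proof (rule Fp_vec_eqI[OF assms(1,2)])
  fix k
  have "(u k + t k) mod int p = (v k + t k) mod int p"
    using assms(3) unfolding Fp_add_def by metis
  then show "u k mod int p = v k mod int p"
    by (simp add: mod_eq_dvd_iff)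
qed

lemma card_Fp_vec:
  assumes "p > 0"
  shows "finite (Fp_vec p n)" "card (Fp_vec p n) = p ^ n"
proof -
  let ?P = "PiE {1..n} (\<lambda>_. {0..<int p})"
  have "bij_betw (\<lambda>v. restrict v {1..n}) (Fp_vec p n) ?P"
  proof (rule bij_betw_byWitness[where f'="\<lambda>f i. if i \<in> {1..n} then f i else 0"])
    show "\<forall>v\<in>Fp_vec p n. (\<lambda>i. if i \<in> {1..n} then restrict v {1..n} i else 0) = v"
      unfolding Fp_vec_def by (auto simp: fun_eq_iff)
    show "\<forall>f\<in>?P. restrict (\<lambda>i. if i \<in> {1..n} then f i else 0) {1..n} = f"
      by (auto simp: PiE_def extensional_def fun_eq_iff)
    show "(\<lambda>v. restrict v {1..n}) ` Fp_vec p n \<subseteq> ?P"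
      unfolding Fp_vec_def by auto
    show "(\<lambda>f i. if i \<in> {1..n} then f i else 0) ` ?P \<subseteq> Fp_vec p n"
      unfolding Fp_vec_def by (auto simp: PiE_def Pi_def)
  qed
  moreover have "finite ?P" "card ?P = p ^ n"
    by (simp_all add: finite_PiE card_PiE)
  ultimately show "finite (Fp_vec p n)" "card (Fp_vec p n) = p ^ n"
    by (metis bij_betw_finite, metis bij_betw_same_card)
qed

lemma Fp_vec_spanned_card_ge:
  assumes "1 < p" and "finite B"
    and span: "\<And>v. v \<in> Fp_vec p n \<Longrightarrow> \<exists>c. v = (\<lambda>k. (\<Sum>b\<in>B. c b * b k) mod int p)"
  shows "n \<le> card (B - {\<lambda>_. 0})"
proof -
  let ?B = "B - {\<lambda>_. 0}"
  let ?D = "PiE ?B (\<lambda>_. {0..<int p})"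
  define \<Phi> where "\<Phi> d = (\<lambda>k. (\<Sum>b\<in>?B. d b * b k) mod int p)" for d
  have "Fp_vec p n \<subseteq> \<Phi> ` ?D"
  proof
    fix v assume "v \<in> Fp_vec p n"
    then obtain c where c: "v = (\<lambda>k. (\<Sum>b\<in>B. c b * b k) mod int p)"
      using span by blast
    define d where "d = restrict (\<lambda>b. c b mod int p) ?B"
    have "\<Phi> d k = v k" for k
    proof -
      have "\<Phi> d k = (\<Sum>b\<in>?B. b k * (c b mod int p)) mod int p"
        unfolding \<Phi>_def d_def by (simp add: mult.commute)
      also have "\<dots> = (\<Sum>b\<in>?B. c b * b k) mod int p"
        by (simp add: sum_mult_mod_right mult.commute)
      also have "(\<Sum>b\<in>?B. c b * b k) = (\<Sum>b\<in>B. c b * b k)"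
        using \<open>finite B\<close> by (intro sum.mono_neutral_left) auto
      finally show ?thesis
        unfolding c .
    qed
    moreover have "d \<in> ?D"
      unfolding d_def using \<open>1 < p\<close> by simp
    ultimately show "v \<in> \<Phi> ` ?D"
      by (metis ext rev_image_eqI)
  qed
  moreover have "finite ?D"
    using \<open>finite B\<close> by (simp add: finite_PiE)
  ultimately have "card (Fp_vec p n) \<le> card ?D"
    using card_image_le card_mono finite_imageI le_trans by meson
  then have "p ^ n \<le> p ^ card ?B"
    using \<open>finite B\<close> \<open>1 < p\<close> by (simp add: card_Fp_vec card_PiE)
  then show ?thesis
    using power_le_imp_le_exp[OF \<open>1 < p\<close>] by blast
qed

section \<open>The character lattice and its Weyl action\<close>

lemma charX_zero: "(\<lambda>_. 0) \<in> charX N"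
  unfolding charX_def by simp

lemma charX_add: "x \<in> charX N \<Longrightarrow> y \<in> charX N \<Longrightarrow> x + y \<in> charX N"
  unfolding charX_def by (simp add: sum.distrib)

lemma charX_uminus: "x \<in> charX N \<Longrightarrow> - x \<in> charX N"
  unfolding charX_def by (simp add: sum_negf)

lemma charX_diff: "x \<in> charX N \<Longrightarrow> y \<in> charX N \<Longrightarrow> (\<lambda>i. x i - y i) \<in> charX N"
  unfolding charX_def by (simp add: sum_subtractf)

definition charX_group :: "nat \<Rightarrow> (nat \<Rightarrow> int) monoid" where
  "charX_group N = \<lparr>carrier = charX N, mult = (+), one = 0\<rparr>"

lemma comm_group_charX_group: "comm_group (charX_group N)"
proof (rule comm_groupI)
  show "\<one>\<^bsub>charX_group N\<^esub> \<in> carrier (charX_group N)"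
    using charX_zero by (simp add: charX_group_def zero_fun_def)
  show "\<exists>y\<in>carrier (charX_group N). y \<otimes>\<^bsub>charX_group N\<^esub> x = \<one>\<^bsub>charX_group N\<^esub>"
    if "x \<in> carrier (charX_group N)" for x
    using that charX_uminus by (intro bexI[of _ "- x"]) (auto simp: charX_group_def)
qed (auto simp: charX_group_def charX_add add.assoc add.commute)

lemma charX_group_inv:
  assumes "x \<in> charX N"
  shows "inv\<^bsub>charX_group N\<^esub> x = - x"
proof -
  interpret comm_group "charX_group N"
    by (rule comm_group_charX_group)
  show ?thesis
    using assms charX_uminus by (intro inv_equality) (auto simp: charX_group_def)
qed

lemma charX_group_pow: "x [^]\<^bsub>charX_group N\<^esub> (k::nat) = (\<lambda>i. int k * x i)"
  by (induction k) (auto simp: charX_group_def fun_eq_iff algebra_simps)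

lemma rcosets_charX_group:
  assumes H: "subgroup H (charX_group N)"
  shows "rcosets\<^bsub>charX_group N\<^esub> H = cosets_in (charX N) H"
proof -
  have HX: "H \<subseteq> charX N"
    using subgroup.subset[OF H] by (simp add: charX_group_def)
  have neg: "- h \<in> H" if "h \<in> H" for h
    using subgroup.m_inv_closed[OF H that] charX_group_inv[of h N] HX that by auto
  have "H #>\<^bsub>charX_group N\<^esub> x = {y \<in> charX N. (\<lambda>i. x i - y i) \<in> H}" if x: "x \<in> charX N" for x
  proof -
    have "y \<in> H #>\<^bsub>charX_group N\<^esub> x \<longleftrightarrow> y \<in> charX N \<and> x - y \<in> H" for y
    proof
      assume "y \<in> H #>\<^bsub>charX_group N\<^esub> x"
      then obtain h where "h \<in> H" "y = h + x"
        unfolding r_coset_def by (auto simp: charX_group_def)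
      then show "y \<in> charX N \<and> x - y \<in> H"
        using HX x neg charX_add by auto
    next
      assume "y \<in> charX N \<and> x - y \<in> H"
      then have "y - x \<in> H"
        using neg[of "x - y"] by simp
      then show "y \<in> H #>\<^bsub>charX_group N\<^esub> x"
        unfolding r_coset_def by (auto simp: charX_group_def intro!: bexI[of _ "y - x"])
    qed
    then show ?thesis
      by (auto simp: fun_diff_def dest: neg)
  qed
  then show ?thesis
    unfolding RCOSETS_def cosets_in_def quotient_def by (auto simp: charX_group_def)
qed

lemma int_spanI: "finite F \<Longrightarrow> F \<subseteq> A \<Longrightarrow> (\<lambda>i. \<Sum>a\<in>F. c a * a i) \<in> int_span A"
  unfolding int_span_def by blast

lemma int_span_base: "a \<in> A \<Longrightarrow> a \<in> int_span A"
  using int_spanI[of "{a}" A "\<lambda>_. 1"] by simp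

lemma int_span_zero: "(\<lambda>_. 0) \<in> int_span A"
  using int_spanI[of "{}" A] by simp

lemma int_span_add:
  assumes "x \<in> int_span A" and "y \<in> int_span A"
  shows "(\<lambda>i. x i + y i) \<in> int_span A"
proof -
  obtain F c where F: "finite F" "F \<subseteq> A" "x = (\<lambda>i. \<Sum>a\<in>F. c a * a i)"
    using assms(1) unfolding int_span_def by blast
  obtain G d where G: "finite G" "G \<subseteq> A" "y = (\<lambda>i. \<Sum>a\<in>G. d a * a i)"
    using assms(2) unfolding int_span_def by blast
  define e where "e a = (if a \<in> F then c a else 0) + (if a \<in> G then d a else 0)" for a
  have "(\<Sum>a\<in>F \<union> G. e a * a i) =
      (\<Sum>a\<in>F \<union> G. if a \<in> F then c a * a i else 0) + (\<Sum>a\<in>F \<union> G. if a \<in> G then d a * a i else 0)"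
    for i unfolding sum.distrib[symmetric] by (rule sum.cong) (auto simp: e_def distrib_right)
  also have "\<dots> i = x i + y i" for i
    unfolding F(3) G(3) using F(1) G(1)
    by (simp add: sum.inter_restrict[symmetric] Int_absorb1 Int_absorb2 Int_commute)
  finally have "(\<Sum>a\<in>F \<union> G. e a * a i) = x i + y i" for i .
  then show ?thesis
    using int_spanI[of "F \<union> G" A e] F G by simp
qed

lemma int_span_scale:
  assumes "x \<in> int_span A"
  shows "(\<lambda>i. c * x i) \<in> int_span A"
proof -
  obtain F d where "finite F" "F \<subseteq> A" "x = (\<lambda>i. \<Sum>a\<in>F. d a * a i)"
    using assms unfolding int_span_def by blast
  then show ?thesis
    using int_spanI[of F A "\<lambda>a. c * d a"] by (simp add: sum_distrib_left mult.assoc)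
qed

lemma int_span_sum:
  "finite S \<Longrightarrow> (\<And>j. j \<in> S \<Longrightarrow> r j \<in> int_span A) \<Longrightarrow> (\<lambda>i. \<Sum>j\<in>S. r j i) \<in> int_span A"
  by (induction S rule: finite_induct) (auto simp: int_span_zero int_span_add)

lemma int_span_subset_charX:
  assumes "A \<subseteq> charX N"
  shows "int_span A \<subseteq> charX N"
proof
  fix x assume "x \<in> int_span A"
  then obtain F c where F: "finite F" "F \<subseteq> A" "x = (\<lambda>i. \<Sum>a\<in>F. c a * a i)"
    unfolding int_span_def by blast
  have a: "(\<forall>i. i \<notin> {1..N} \<longrightarrow> a i = 0) \<and> (\<Sum>i=1..N. a i) = 0" if "a \<in> F" for a
    using that F(2) assms unfolding charX_def by blast
  have "(\<Sum>i=1..N. x i) = (\<Sum>a\<in>F. c a * (\<Sum>i=1..N. a i))"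
    unfolding F(3) sum_distrib_left by (rule sum.swap)
  also have "\<dots> = 0"
    using a by simp
  finally have "(\<Sum>i=1..N. x i) = 0" .
  moreover have "x i = 0" if "i \<notin> {1..N}" for i
    unfolding F(3) using a that by (simp add: sum.neutral)
  ultimately show "x \<in> charX N"
    unfolding charX_def by blast
qed

lemma subgroup_int_span:
  assumes "A \<subseteq> charX N"
  shows "subgroup (int_span A) (charX_group N)"
proof (rule group.subgroupI[OF comm_group.axioms(2)[OF comm_group_charX_group]])
  show "int_span A \<subseteq> carrier (charX_group N)"
    using int_span_subset_charX[OF assms] by (simp add: charX_group_def)
  show "int_span A \<noteq> {}"
    using int_span_zero by blast
  show "inv\<^bsub>charX_group N\<^esub> x \<in> int_span A" if "x \<in> int_span A" for x
    using that int_span_scale[of x A "-1"] int_span_subset_charX[OF assms] charX_group_inv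
    by (auto simp: fun_Compl_def)
  show "x \<otimes>\<^bsub>charX_group N\<^esub> y \<in> int_span A" if "x \<in> int_span A" "y \<in> int_span A" for x y
    using int_span_add[OF that] by (simp add: charX_group_def plus_fun_def)
qed

lemma admissible_gen_decomposition:
  assumes "admissible_gen N p P A" and "x \<in> charX N"
  shows "\<exists>h\<in>int_span A. \<exists>y\<in>charX N. x = (\<lambda>i. h i + int p * y i)"
proof -
  have sub: "subgroup (int_span A) (charX_group N)"
    using assms(1) subgroup_int_span unfolding admissible_gen_def by blast
  moreover have "coprime (card (rcosets\<^bsub>charX_group N\<^esub> int_span A)) p"
    using assms(1) unfolding rcosets_charX_group[OF sub] admissible_gen_def by auto
  moreover have "x \<in> carrier (charX_group N)"
    using assms(2) by (simp add: charX_group_def)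
  ultimately obtain h y where "h \<in> int_span A" "y \<in> carrier (charX_group N)"
    "x = h \<otimes>\<^bsub>charX_group N\<^esub> y [^]\<^bsub>charX_group N\<^esub> p"
    using comm_group.pow_decomposition_coprime_index[OF comm_group_charX_group] by blast
  then show ?thesis
    unfolding charX_group_pow by (auto simp: charX_group_def plus_fun_def)
qed

lemma wact_apply: "wact w \<chi> i = \<chi> (inv' w i)"
  unfolding wact_def by simp

lemma wact_comp:
  assumes "a permutes S" and "b permutes S"
  shows "wact (a \<circ> b) \<chi> = wact a (wact b \<chi>)"
  unfolding wact_def using o_inv_distrib[OF permutes_bij[OF assms(1)] permutes_bij[OF assms(2)]]
  by (simp add: comp_assoc)

lemma wact_inv_cancel:
  assumes "a permutes S"
  shows "wact (inv' a) (wact a \<chi>) = \<chi>"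
  unfolding wact_def using permutes_inv_o(2)[OF assms] permutes_inv_inv[OF assms]
  by (simp add: comp_assoc)

lemma wact_in_charX:
  assumes w: "w permutes {1..N}" and \<chi>: "\<chi> \<in> charX N"
  shows "wact w \<chi> \<in> charX N"
proof -
  have "wact w \<chi> i = 0" if "i \<notin> {1..N}" for i
    using \<chi> that permutes_not_in[OF permutes_inv[OF w] that] unfolding wact_apply charX_def by auto
  moreover have "(\<Sum>i=1..N. wact w \<chi> i) = (\<Sum>i=1..N. \<chi> i)"
    using sum.reindex_bij_betw[OF permutes_imp_bij[OF w], of "wact w \<chi>"]
    by (simp add: wact_apply permutes_inverses(2)[OF w])
  ultimately show ?thesis
    using \<chi> unfolding charX_def by simp
qed

lemma subgroup_Weps: "subgroup (Weps N \<epsilon>) (sym_group N)"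
proof (rule group.subgroupI[OF sym_group_is_group])
  show "Weps N \<epsilon> \<subseteq> carrier (sym_group N)"
    unfolding Weps_def by auto
  show "Weps N \<epsilon> \<noteq> {}"
    using permutes_id[of "{1..N}"] unfolding Weps_def sym_group_carrier
    by (auto simp: wact_def inv_id intro!: exI[of _ id])
next
  fix a assume a: "a \<in> Weps N \<epsilon>"
  then have a_perm: "a permutes {1..N}"
    by (simp add: Weps_def sym_group_carrier)
  have "\<epsilon> (wact (inv' a) \<chi>) = \<epsilon> \<chi>" if "\<chi> \<in> charX N" for \<chi>
  proof -
    have "\<epsilon> (wact (inv' a) \<chi>) = \<epsilon> (wact a (wact (inv' a) \<chi>))"
      using a wact_in_charX[OF permutes_inv[OF a_perm] that] by (simp add: Weps_def)
    also have "wact a (wact (inv' a) \<chi>) = \<chi>"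
      using wact_inv_cancel[OF permutes_inv[OF a_perm]] by (simp add: permutes_inv_inv[OF a_perm])
    finally show ?thesis .
  qed
  then show "inv\<^bsub>sym_group N\<^esub> a \<in> Weps N \<epsilon>"
    using permutes_inv[OF a_perm] a_perm
    by (simp add: Weps_def sym_group_carrier sym_group_inv_equality)
next
  fix a b assume a: "a \<in> Weps N \<epsilon>" and b: "b \<in> Weps N \<epsilon>"
  then have perms: "a permutes {1..N}" "b permutes {1..N}"
    by (simp_all add: Weps_def sym_group_carrier)
  have "\<epsilon> (wact (a \<circ> b) \<chi>) = \<epsilon> \<chi>" if "\<chi> \<in> charX N" for \<chi>
    using a b that wact_in_charX[OF perms(2) that] by (simp add: Weps_def wact_comp[OF perms])
  then show "a \<otimes>\<^bsub>sym_group N\<^esub> b \<in> Weps N \<epsilon>"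
    using permutes_compose[OF perms(2,1)] by (simp add: Weps_def sym_group_carrier sym_group_mult)
qed

lemma charX_fixed_by_transitive:
  assumes P: "P \<subseteq> carrier (sym_group N)" and j0: "j0 \<in> {1..N}"
    and transitive: "\<And>i. i \<in> {1..N} \<Longrightarrow> \<exists>w\<in>P. w j0 = i"
  shows "{\<chi> \<in> charX N. \<forall>w\<in>P. wact w \<chi> = \<chi>} = {\<lambda>_. 0}"
proof (intro equalityI subsetI)
  fix \<chi> assume "\<chi> \<in> {\<chi> \<in> charX N. \<forall>w\<in>P. wact w \<chi> = \<chi>}"
  then have \<chi>: "\<chi> \<in> charX N" and fixed: "\<And>w. w \<in> P \<Longrightarrow> wact w \<chi> = \<chi>"
    by auto
  have const: "\<chi> i = \<chi> j0" if i: "i \<in> {1..N}" for i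
  proof -
    obtain w where "w \<in> P" "w j0 = i"
      using transitive[OF i] by blast
    moreover from this have "inv' w i = j0"
      using P permutes_inverses(2) by (fastforce simp: sym_group_carrier)
    ultimately show ?thesis
      using fixed[of w] by (metis wact_apply)
  qed
  have "int N * \<chi> j0 = 0"
    using \<chi> const unfolding charX_def by simp
  then have "\<chi> j0 = 0"
    using j0 by simp
  then show "\<chi> \<in> {\<lambda>_. 0}"
    using \<chi> const unfolding charX_def by auto
qed (auto simp: charX_zero wact_def)

definition root_vec :: "nat \<Rightarrow> nat \<Rightarrow> nat \<Rightarrow> int" where
  "root_vec i j = (\<lambda>k. (if k = i then 1 else 0) - (if k = j then 1 else 0))"

lemma roots_eq: "roots N = {root_vec i j | i j. i \<in> {1..N} \<and> j \<in> {1..N} \<and> i \<noteq> j}"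
  unfolding roots_def root_vec_def by simp

lemma root_vec_in_charX: "i \<in> {1..N} \<Longrightarrow> j \<in> {1..N} \<Longrightarrow> root_vec i j \<in> charX N"
  unfolding charX_def root_vec_def by (simp add: sum_subtractf)

lemma sum_root_vec_mult:
  assumes "finite S" "i \<in> S" "j \<in> S"
  shows "(\<Sum>k\<in>S. root_vec i j k * f k) = f i - f j"
proof -
  have "(\<Sum>k\<in>S. root_vec i j k * f k) = (\<Sum>k\<in>S. (if k = i then f k else 0) - (if k = j then f k else 0))"
    by (rule sum.cong) (auto simp: root_vec_def)
  also have "\<dots> = f i - f j"
    using assms by (simp add: sum_subtractf)
  finally show ?thesis .
qed

lemma wact_root_vec:
  assumes "w permutes S"
  shows "wact w (root_vec i j) = root_vec (w i) (w j)"
  using permutes_inv_eq[OF assms] by (auto simp: fun_eq_iff wact_apply root_vec_def)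

lemma charX_subset_int_span_roots:
  assumes "N > 0"
  shows "charX N \<subseteq> int_span (roots N)"
proof
  fix \<chi> assume \<chi>: "\<chi> \<in> charX N"
  have "(\<Sum>i\<in>{1..N}. \<chi> i * root_vec i 1 k) = \<chi> k" for k
  proof -
    have "(\<Sum>i\<in>{1..N}. \<chi> i * root_vec i 1 k)
        = (\<Sum>i\<in>{1..N}. (if i = k then \<chi> i else 0) - (if k = 1 then \<chi> i else 0))"
      by (rule sum.cong) (auto simp: root_vec_def)
    also have "\<dots> = (if k \<in> {1..N} then \<chi> k else 0) - (if k = 1 then (\<Sum>i\<in>{1..N}. \<chi> i) else 0)"
      by (simp add: sum_subtractf)
    also have "\<dots> = \<chi> k"
      using \<chi> unfolding charX_def by auto
    finally show ?thesis .
  qed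
  then have "\<chi> = (\<lambda>k. \<Sum>i\<in>{1..N}. \<chi> i * root_vec i 1 k)"
    by auto
  also have "\<dots> \<in> int_span (roots N)"
  proof (rule int_span_sum)
    fix i assume i: "i \<in> {1..N}"
    show "(\<lambda>k. \<chi> i * root_vec i 1 k) \<in> int_span (roots N)"
    proof (cases "i = 1")
      case True
      then show ?thesis
        using int_span_zero by (simp add: root_vec_def)
    next
      case False
      moreover have "1 \<in> {1..N}"
        using assms by simp
      ultimately have "root_vec i 1 \<in> roots N"
        using i unfolding roots_eq by blast
      then show ?thesis
        by (rule int_span_scale[OF int_span_base])
    qed
  qed simp
  finally show "\<chi> \<in> int_span (roots N)" .
qed

lemma admissible_gen_roots:
  assumes "N > 0" and "P \<subseteq> carrier (sym_group N)"
  shows "admissible_gen N p P (roots N)"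
proof -
  have "{(x, y). x \<in> charX N \<and> y \<in> charX N \<and> (\<lambda>i. x i - y i) \<in> int_span (roots N)}
      = charX N \<times> charX N"
    using charX_subset_int_span_roots[OF assms(1)] charX_diff by auto
  then have "cosets_in (charX N) (int_span (roots N)) = {charX N}"
    unfolding cosets_in_def quotient_def using charX_zero by auto
  moreover have "roots N \<subseteq> (\<lambda>(i, j). root_vec i j) ` ({1..N} \<times> {1..N})"
    unfolding roots_eq by auto
  then have "finite (roots N)"
    by (rule finite_subset) simp
  moreover have "roots N \<subseteq> charX N"
    unfolding roots_eq using root_vec_in_charX by auto
  moreover have "wact w a \<in> roots N" if w: "w \<in> P" and a: "a \<in> roots N" for w a
  proof -
    have w: "w permutes {1..N}"
      using w assms(2) by (auto simp: sym_group_carrier)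
    obtain i j where "i \<in> {1..N}" "j \<in> {1..N}" "i \<noteq> j" "a = root_vec i j"
      using a unfolding roots_eq by blast
    moreover from this have "wact w a = root_vec (w i) (w j)"
      using wact_root_vec[OF w] by simp
    ultimately show ?thesis
      unfolding roots_eq using permutes_in_image[OF w] permutes_inj[OF w] by (auto dest: injD)
  qed
  ultimately show ?thesis
    unfolding admissible_gen_def by simp
qed

lemma Rank_geI:
  assumes "admissible_gen N p P A\<^sub>0" and "\<And>A. admissible_gen N p P A \<Longrightarrow> m \<le> card A"
  shows "m \<le> Rank N p P"
proof -
  obtain A where "admissible_gen N p P A" "card A = Rank N p P"
    using LeastI_ex[of "\<lambda>m. \<exists>A. admissible_gen N p P A \<and> card A = m"] assms(1)
    unfolding Rank_def by blast
  then show ?thesis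
    using assms(2) by metis
qed

section \<open>Coordinates labelled by \<open>F\<^sub>p\<^sup>n\<close>\<close>

locale Fp_labelling =
  fixes p n :: nat and V :: "nat \<Rightarrow> nat \<Rightarrow> int"
  assumes prime_p: "prime p"
    and V_bij: "bij_betw V {1..p ^ n} (Fp_vec p n)"
begin

abbreviation "N \<equiv> p ^ n"
abbreviation "I \<equiv> {1..p ^ n}"

lemma p_gt_1: "p > 1"
  using prime_p prime_gt_1_nat by blast

lemma p_pos: "p > 0"
  using p_gt_1 by simp

lemma V_in_Fp_vec: "i \<in> I \<Longrightarrow> V i \<in> Fp_vec p n"
  using V_bij by (rule bij_betw_apply)

lemma V_inj: "i \<in> I \<Longrightarrow> j \<in> I \<Longrightarrow> V i = V j \<Longrightarrow> i = j"
  using V_bij by (auto simp: bij_betw_def inj_on_def)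

lemma V_inv_into:
  assumes "v \<in> Fp_vec p n"
  shows "inv_into I V v \<in> I \<and> V (inv_into I V v) = v"
proof -
  have "v \<in> V ` I"
    using assms V_bij by (simp add: bij_betw_def)
  then show ?thesis
    by (blast intro: inv_into_into f_inv_into_f)
qed

definition origin :: nat where
  "origin = inv_into I V (\<lambda>_. 0)"

lemma origin_in: "origin \<in> I" and V_origin: "V origin = (\<lambda>_. 0)"
  using V_inv_into[OF zero_in_Fp_vec[OF p_pos]] unfolding origin_def by auto

definition eps :: "(nat \<Rightarrow> int) \<Rightarrow> nat \<Rightarrow> int" where
  "eps \<chi> = (\<lambda>k. (\<Sum>i\<in>I. \<chi> i * V i k) mod int p)"

lemma eps_in_Fp_vec: "eps \<chi> \<in> Fp_vec p n"
  unfolding eps_def using p_pos Fp_vec_outside[OF V_in_Fp_vec]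
  by (intro Fp_vec_modI) auto

lemma eps_add: "eps (\<lambda>i. \<chi> i + \<psi> i) = Fp_add p (eps \<chi>) (eps \<psi>)"
  unfolding eps_def Fp_add_def by (simp add: fun_eq_iff distrib_right sum.distrib mod_add_eq)

lemma eps_add_mult_p: "eps (\<lambda>i. \<chi> i + int p * \<psi> i) = eps \<chi>"
  unfolding eps_def
  by (simp add: fun_eq_iff distrib_right sum.distrib mult.assoc sum_distrib_left[symmetric])

lemma eps_lincomb: "eps (\<lambda>i. \<Sum>a\<in>F. c a * a i) = (\<lambda>k. (\<Sum>a\<in>F. c a * eps a k) mod int p)"
proof
  fix k
  have "(\<Sum>i\<in>I. (\<Sum>a\<in>F. c a * a i) * V i k) = (\<Sum>a\<in>F. c a * (\<Sum>i\<in>I. a i * V i k))"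
    unfolding sum_distrib_right sum_distrib_left mult.assoc by (rule sum.swap)
  then show "eps (\<lambda>i. \<Sum>a\<in>F. c a * a i) k = (\<Sum>a\<in>F. c a * eps a k) mod int p"
    unfolding eps_def by (simp add: sum_mult_mod_right)
qed

lemma eps_root_vec:
  "i \<in> I \<Longrightarrow> j \<in> I \<Longrightarrow> eps (root_vec i j) = (\<lambda>k. (V i k - V j k) mod int p)"
  unfolding eps_def by (simp add: sum_root_vec_mult)

lemma eps_image: "eps ` charX N = Fp_vec p n"
proof (intro equalityI subsetI)
  fix v assume v: "v \<in> Fp_vec p n"
  define j where "j = inv_into I V v"
  have j: "j \<in> I" "V j = v"
    using V_inv_into[OF v] unfolding j_def by auto
  have "eps (root_vec j origin) = v"
    using eps_root_vec[OF j(1) origin_in] V_origin Fp_vec_mod[OF v] j(2) by auto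
  then show "v \<in> eps ` charX N"
    using root_vec_in_charX[OF j(1) origin_in] by (metis image_eqI)
qed (auto simp: eps_in_Fp_vec)

lemma eps_roots_nonzero:
  assumes "\<alpha> \<in> roots N"
  shows "eps \<alpha> \<noteq> (\<lambda>_. 0)"
proof
  assume eps_0: "eps \<alpha> = (\<lambda>_. 0)"
  obtain i j where ij: "i \<in> I" "j \<in> I" "i \<noteq> j" "\<alpha> = root_vec i j"
    using assms unfolding roots_eq by blast
  have "(V i k - V j k) mod int p = 0" for k
    using eps_0 eps_root_vec[OF ij(1,2)] ij(4) by metis
  then have "V i = V j"
    using Fp_vec_eqI V_in_Fp_vec ij(1,2) by (metis mod_eq_dvd_iff mod_eq_0_iff_dvd)
  then show False
    using V_inj ij by blast
qed

definition transl :: "(nat \<Rightarrow> int) \<Rightarrow> nat \<Rightarrow> nat" where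
  "transl t i = (if i \<in> I then inv_into I V (Fp_add p (V i) t) else i)"

lemma transl_in: "t \<in> Fp_vec p n \<Longrightarrow> i \<in> I \<Longrightarrow> transl t i \<in> I"
  and V_transl: "t \<in> Fp_vec p n \<Longrightarrow> i \<in> I \<Longrightarrow> V (transl t i) = Fp_add p (V i) t"
  using V_inv_into[OF Fp_add_in_Fp_vec[OF p_pos V_in_Fp_vec]] unfolding transl_def by auto

lemma transl_outside: "i \<notin> I \<Longrightarrow> transl t i = i"
  unfolding transl_def by (simp only: if_False)

lemma transl_permutes:
  assumes t: "t \<in> Fp_vec p n"
  shows "transl t permutes I"
proof -
  have "inj_on (transl t) I"
  proof (rule inj_onI)
    fix i j assume ij: "i \<in> I" "j \<in> I" and "transl t i = transl t j"
    then have "Fp_add p (V i) t = Fp_add p (V j) t"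
      using V_transl[OF t] by metis
    then have "V i = V j"
      using Fp_add_right_cancel V_in_Fp_vec ij by blast
    then show "i = j"
      using V_inj ij by blast
  qed
  moreover have "transl t ` I \<subseteq> I"
    using transl_in[OF t] by auto
  ultimately have "bij_betw (transl t) I I"
    by (simp add: bij_betw_def endo_inj_surj)
  then show ?thesis
    using transl_outside by (rule bij_imp_permutes)
qed

lemma transl_zero: "transl (\<lambda>_. 0) = id"
proof
  fix i show "transl (\<lambda>_. 0) i = id i"
  proof (cases "i \<in> I")
    case True
    then have "inv_into I V (V i) = i"
      using V_bij by (metis bij_betw_def inv_into_f_f)
    then show ?thesis
      using True by (simp add: transl_def Fp_add_zero_right[OF V_in_Fp_vec[OF True]])
  qed (auto simp: transl_def)
qed

lemma transl_origin: "t \<in> Fp_vec p n \<Longrightarrow> V (transl t origin) = t"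
  using V_transl[OF _ origin_in] V_origin Fp_add_zero_left by simp

lemma eps_wact:
  assumes w: "w permutes I"
  shows "eps (wact w \<chi>) = (\<lambda>k. (\<Sum>i\<in>I. \<chi> i * V (w i) k) mod int p)"
  unfolding eps_def
  using sum.reindex_bij_betw[OF permutes_imp_bij[OF w], of "\<lambda>i. wact w \<chi> i * V i _"]
  by (simp add: wact_apply permutes_inverses(2)[OF w])

lemma transl_in_Weps:
  assumes t: "t \<in> Fp_vec p n"
  shows "transl t \<in> Weps N eps"
proof -
  have "eps (wact (transl t) \<chi>) k = eps \<chi> k" if \<chi>: "\<chi> \<in> charX N" for \<chi> k
  proof -
    have "eps (wact (transl t) \<chi>) k = (\<Sum>i\<in>I. \<chi> i * ((V i k + t k) mod int p)) mod int p"
      by (simp add: eps_wact[OF transl_permutes[OF t]] V_transl[OF t] Fp_add_def)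
    also have "\<dots> = (\<Sum>i\<in>I. \<chi> i * (V i k + t k)) mod int p"
      by (rule sum_mult_mod_right)
    also have "\<dots> = ((\<Sum>i\<in>I. \<chi> i * V i k) + (\<Sum>i\<in>I. \<chi> i) * t k) mod int p"
      by (simp add: distrib_left sum.distrib sum_distrib_right)
    also have "\<dots> = eps \<chi> k"
      using \<chi> unfolding charX_def eps_def by simp
    finally show ?thesis .
  qed
  then show ?thesis
    unfolding Weps_def sym_group_carrier using transl_permutes[OF t] by auto
qed

lemma Weps_eq_transl:
  assumes w: "w \<in> Weps N eps"
  shows "V (w origin) \<in> Fp_vec p n" and "w = transl (V (w origin))"
proof -
  have w_perm: "w permutes I"
    using w by (simp add: Weps_def sym_group_carrier)
  let ?t = "V (w origin)"
  show t: "?t \<in> Fp_vec p n"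
    using V_in_Fp_vec permutes_in_image[OF w_perm] origin_in by simp
  \<comment> \<open>Invariance of \<open>eps\<close> on the root \<open>root_vec i origin\<close> forces \<open>V (w i) = V i + V (w origin)\<close>.\<close>
  have V_w: "V (w i) = V (transl ?t i)" if i: "i \<in> I" for i
  proof -
    have eps_eq: "eps (wact w (root_vec i origin)) = eps (root_vec i origin)"
      using w root_vec_in_charX[OF i origin_in] unfolding Weps_def by blast
    have "(V (w i) k - ?t k) mod int p = V i k" for k
    proof -
      have "(\<Sum>j\<in>I. root_vec i origin j * V (w j) k) mod int p = (V i k - V origin k) mod int p"
        using fun_cong[OF eps_eq, of k] by (simp add: eps_wact[OF w_perm] eps_root_vec[OF i origin_in])
      then show ?thesis
        using Fp_vec_mod[OF V_in_Fp_vec[OF i]] sum_root_vec_mult[OF _ i origin_in]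
        by (simp add: V_origin)
    qed
    then have "V (w i) k = (V i k + ?t k) mod int p" for k
      using Fp_vec_mod[OF V_in_Fp_vec[OF permutes_in_image[OF w_perm, THEN iffD2, OF i]]]
      by (metis diff_add_cancel mod_add_left_eq)
    then show ?thesis
      by (simp add: V_transl[OF t i] Fp_add_def fun_eq_iff)
  qed
  show "w = transl ?t"
  proof
    fix i show "w i = transl ?t i"
    proof (cases "i \<in> I")
      case True
      then show ?thesis
        using V_inj V_w[OF True] permutes_in_image[OF w_perm] transl_in[OF t]
        by blast
    next
      case False
      then show ?thesis
        using permutes_not_in[OF w_perm] transl_outside by simp
    qed
  qed
qed

lemma Weps_eq: "Weps N eps = transl ` Fp_vec p n"
proof (intro equalityI subsetI)
  fix w assume "w \<in> Weps N eps"
  then show "w \<in> transl ` Fp_vec p n"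
    using Weps_eq_transl by (metis image_eqI)
qed (auto simp: transl_in_Weps)

lemma card_Weps: "card (Weps N eps) = N"
proof -
  have "inj_on transl (Fp_vec p n)"
    by (rule inj_onI) (metis transl_origin)
  then show ?thesis
    unfolding Weps_eq by (simp add: card_image card_Fp_vec[OF p_pos])
qed

lemma is_sylow_Weps: "is_sylow N p (Weps N eps) (Weps N eps)"
  unfolding is_sylow_def using subgroup_Weps card_Weps prime_p
  by (simp add: multiplicity_prime_power prime_imp_prime_elem)

lemma Weps_fixed_charX: "{\<chi> \<in> charX N. \<forall>w\<in>Weps N eps. wact w \<chi> = \<chi>} = {\<lambda>_. 0}"
proof (rule charX_fixed_by_transitive[OF _ origin_in])
  show "Weps N eps \<subseteq> carrier (sym_group N)"
    unfolding Weps_def by blast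
  show "\<exists>w\<in>Weps N eps. w origin = i" if i: "i \<in> I" for i
  proof
    have "V (transl (V i) origin) = V i"
      using transl_origin[OF V_in_Fp_vec[OF i]] .
    then show "transl (V i) origin = i"
      using V_inj transl_in[OF V_in_Fp_vec[OF i] origin_in] i by blast
  qed (rule transl_in_Weps[OF V_in_Fp_vec[OF i]])
qed

section \<open>Free orbits and the rank bound\<close>

lemma eps_eq_0_if_transl_invariant:
  assumes s: "s \<in> Fp_vec p n" "s \<noteq> (\<lambda>_. 0)"
    and a: "a \<in> charX N" and invariant: "\<And>i. i \<in> I \<Longrightarrow> a (transl s i) = a i"
  shows "eps a = (\<lambda>_. 0)"
proof -
  have weighted_sum_0: "(\<Sum>i\<in>I. a i * L i) mod int p = 0"
    if shift: "\<And>i. i \<in> I \<Longrightarrow> L (transl s i) mod int p = (L i + \<sigma>) mod int p"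
      and \<sigma>: "\<sigma> mod int p \<noteq> 0" for L \<sigma>
  proof -
    have cop: "coprime \<sigma> (int p)"
      using \<sigma> prime_p prime_imp_coprime[of "int p" \<sigma>] by (auto simp: coprime_commute dvd_eq_mod_eq_0)
    have "(\<Sum>i\<in>I. a i * (L i mod int p)) = 0"
      using weighted_residue_sum_eq_0[where a=a and L=L,
          OF transl_permutes[OF s(1)] p_pos cop shift invariant] a
      unfolding charX_def by simp
    then show ?thesis
      using sum_mult_mod_right[where c=a and f=L and A=I and m="int p"] by simp
  qed
  have shift: "V (transl s i) k = (V i k + s k) mod int p" if "i \<in> I" for i k
    using V_transl[OF s(1) that] by (simp add: Fp_add_def)
  define X where "X k = (\<Sum>i\<in>I. a i * V i k)" for k
  have X_nonzero: "X k mod int p = 0" if "s k \<noteq> 0" for k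
    using weighted_sum_0[of "\<lambda>i. V i k" "s k"] that shift Fp_vec_mod[OF s(1)] unfolding X_def by simp
  obtain k\<^sub>0 where k\<^sub>0: "s k\<^sub>0 \<noteq> 0"
    using s(2) by auto
  \<comment> \<open>In a coordinate where \<open>s\<close> vanishes, shift by the \<open>k\<^sub>0\<close>-th coordinate to make the step nonzero.\<close>
  have "X k mod int p = 0" for k
  proof (cases "s k = 0")
    case True
    have "(X k + X k\<^sub>0) mod int p = 0"
      using weighted_sum_0[of "\<lambda>i. V i k + V i k\<^sub>0" "s k\<^sub>0"] k\<^sub>0 Fp_vec_mod[OF s(1)]
      by (simp add: X_def shift True mod_add_eq algebra_simps sum.distrib)
    then show ?thesis
      using X_nonzero[OF k\<^sub>0] by (simp add: mod_eq_0_iff_dvd dvd_add_left_iff)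
  qed (rule X_nonzero)
  then show ?thesis
    unfolding eps_def X_def by auto
qed

lemma Weps_stabilizer_trivial:
  assumes a: "a \<in> charX N" "eps a \<noteq> (\<lambda>_. 0)"
    and w: "w \<in> Weps N eps" and fixed: "wact w a = a"
  shows "w = id"
proof -
  let ?t = "V (w origin)"
  have t: "?t \<in> Fp_vec p n" and w_eq: "w = transl ?t"
    using Weps_eq_transl[OF w] by auto
  have w_perm: "w permutes I"
    using transl_permutes[OF t] w_eq by simp
  have "a (w i) = a i" for i
    using fun_cong[OF fixed, of "w i"] by (simp add: wact_apply permutes_inverses(2)[OF w_perm])
  then have "?t = (\<lambda>_. 0)"
    using eps_eq_0_if_transl_invariant[OF t _ a(1)] a(2) w_eq by metis
  then show "w = id"
    using w_eq transl_zero by simp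
qed

lemma inj_on_Weps_orbit:
  assumes "a \<in> charX N" "eps a \<noteq> (\<lambda>_. 0)"
  shows "inj_on (\<lambda>w. wact w a) (Weps N eps)"
proof (rule inj_onI)
  fix w w' assume w: "w \<in> Weps N eps" and w': "w' \<in> Weps N eps" and eq: "wact w a = wact w' a"
  interpret Weps: subgroup "Weps N eps" "sym_group N"
    by (rule subgroup_Weps)
  have perms: "w permutes I" "w' permutes I"
    using w w' by (simp_all add: Weps_def sym_group_carrier)
  have "inv' w' \<circ> w \<in> Weps N eps"
    using Weps.m_closed[OF Weps.m_inv_closed[OF w'] w] Weps.subset w'
    by (simp add: sym_group_mult sym_group_inv_equality)
  moreover have "wact (inv' w' \<circ> w) a = a"
    using eq wact_inv_cancel[OF perms(2)] by (simp add: wact_comp[OF permutes_inv[OF perms(2)] perms(1)])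
  ultimately have "inv' w' \<circ> w = id"
    by (rule Weps_stabilizer_trivial[OF assms])
  then show "w = w'"
    by (metis comp_assoc comp_id id_comp permutes_inv_o(1)[OF perms(2)])
qed

lemma Fp_vec_subset_eps_int_span:
  assumes "admissible_gen N p P A"
  shows "Fp_vec p n \<subseteq> eps ` int_span A"
proof
  fix v assume "v \<in> Fp_vec p n"
  then obtain x where x: "x \<in> charX N" "v = eps x"
    using eps_image by blast
  obtain h y where "h \<in> int_span A" "x = (\<lambda>i. h i + int p * y i)"
    using admissible_gen_decomposition[OF assms x(1)] by blast
  then show "v \<in> eps ` int_span A"
    using x(2) eps_add_mult_p by auto
qed

lemma card_nonzero_eps_image:
  assumes adm: "admissible_gen N p P A"
  shows "n \<le> card (eps ` A - {\<lambda>_. 0})"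
proof (rule Fp_vec_spanned_card_ge[OF p_gt_1])
  have A: "finite A" "A \<subseteq> charX N"
    using adm by (auto simp: admissible_gen_def)
  then show "finite (eps ` A)"
    by simp
  fix v assume "v \<in> Fp_vec p n"
  then obtain F c where F: "finite F" "F \<subseteq> A" "v = eps (\<lambda>i. \<Sum>a\<in>F. c a * a i)"
    using Fp_vec_subset_eps_int_span[OF adm] unfolding int_span_def by blast
  define d where "d b = (\<Sum>a\<in>{a\<in>F. eps a = b}. c a)" for b
  have "(\<Sum>a\<in>F. c a * eps a k) = (\<Sum>b\<in>eps ` A. d b * b k)" for k
  proof -
    have "(\<Sum>a\<in>F. c a * eps a k) = (\<Sum>b\<in>eps ` A. \<Sum>a\<in>{a\<in>F. eps a = b}. c a * eps a k)"
      using F A by (intro sum.group[symmetric]) auto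
    also have "\<dots> = (\<Sum>b\<in>eps ` A. d b * b k)"
      unfolding d_def sum_distrib_right by (intro sum.cong) auto
    finally show ?thesis .
  qed
  then show "\<exists>d. v = (\<lambda>k. (\<Sum>b\<in>eps ` A. d b * b k) mod int p)"
    using F(3) eps_lincomb by auto
qed

lemma card_eps_fibre:
  assumes adm: "admissible_gen N p (Weps N eps) A" and b: "b \<in> eps ` A - {\<lambda>_. 0}"
  shows "N \<le> card {a \<in> A. eps a = b}"
proof -
  obtain a where a: "a \<in> A" "eps a = b"
    using b by blast
  have A: "finite A" "A \<subseteq> charX N" "\<And>w. w \<in> Weps N eps \<Longrightarrow> wact w a \<in> A"
    using adm a(1) by (auto simp: admissible_gen_def)
  then have "(\<lambda>w. wact w a) ` Weps N eps \<subseteq> {a \<in> A. eps a = b}"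
    using a by (auto simp: Weps_def)
  then have "card (Weps N eps) \<le> card {a \<in> A. eps a = b}"
    using inj_on_Weps_orbit[of a] a b A by (intro card_inj_on_le) auto
  then show ?thesis
    by (simp add: card_Weps)
qed

lemma admissible_gen_card_ge:
  assumes "admissible_gen N p (Weps N eps) A"
  shows "n * N \<le> card A"
proof -
  have "card (eps ` A - {\<lambda>_. 0}) * N \<le> card A"
    using assms card_eps_fibre[OF assms]
    by (intro card_ge_mult_card_fibres[of A _ N eps]) (auto simp: admissible_gen_def)
  then show ?thesis
    using card_nonzero_eps_image[OF assms] by (meson le_trans mult_le_mono1)
qed

lemma Rank_Weps_ge: "n * N \<le> Rank N p (Weps N eps)"
proof (rule Rank_geI)
  show "admissible_gen N p (Weps N eps) (roots N)"
    using p_pos by (intro admissible_gen_roots) (auto simp: Weps_def)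
qed (rule admissible_gen_card_ge)

end

theorem proposition14p1:
  fixes p n :: nat
  assumes "prime p" and "CHAR('k::field) \<noteq> p" and "n \<ge> 1"
  shows "\<exists>\<epsilon> P. is_hom_to_Fp (p ^ n) p n \<epsilon> \<and>
           \<epsilon> ` charX (p ^ n) = Fp_vec p n \<and>
           (\<forall>\<alpha>\<in>roots (p ^ n). \<epsilon> \<alpha> \<noteq> (\<lambda>_. 0)) \<and>
           is_sylow (p ^ n) p (Weps (p ^ n) \<epsilon>) P \<and>
           {\<chi> \<in> charX (p ^ n). \<forall>w\<in>P. wact w \<chi> = \<chi>} = {\<lambda>_. 0} \<and>
           Rank (p ^ n) p P \<ge> n * p ^ n"
proof -
  obtain V where "bij_betw V {1..p ^ n} (Fp_vec p n)"
    using finite_same_card_bij card_Fp_vec prime_gt_0_nat[OF assms(1)]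
    by (metis card_atLeastAtMost diff_Suc_1 finite_atLeastAtMost)
  then interpret Fp_labelling p n V
    using assms(1) by unfold_locales
  have "is_hom_to_Fp (p ^ n) p n eps"
    unfolding is_hom_to_Fp_def using eps_in_Fp_vec eps_add by blast
  then show ?thesis
    using eps_image eps_roots_nonzero is_sylow_Weps Weps_fixed_charX Rank_Weps_ge by blast
qed

end
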